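(* Let $G$ be a graph of order $n\ge 9$. If $\tau(G)\le\frac{n}{2}$ and ${\rm diam}(G)=2$, then $\beta_p(G)\le n-3$.
   Context: All graphs are finite, simple, undirected and connected. Two vertices $u,v$ are twins if $N(u)\setminus\{v\}=N(v)\setminus\{u\}$; the twin number $\tau(G)$ is the maximum cardinality of an equivalence class of the twin relation. For a partition $\Pi=\{S_1,\dots,S_k\}$ of $V(G)$, $r(u|\Pi)=(d(u,S_1),\dots,d(u,S_k))$ with $d(u,S)=\min_{w\in S}d(u,w)$; $\Pi$ is locating if $r(u|\Pi)\ne r(v|\Pi)$ for all distinct $u,v$; $\beta_p(G)$ is the minimum size of a locating partition. *)

theory Defs
  imports Main
begin

definition simple_graph :: "'a set \<Rightarrow> ('a \<Rightarrow> 'a \<Rightarrow> bool) \<Rightarrow> bool" where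
  "simple_graph V E \<longleftrightarrow> finite V \<and> V \<noteq> {} \<and>
     (\<forall>u v. E u v \<longrightarrow> u \<in> V \<and> v \<in> V) \<and>
     (\<forall>u v. E u v \<longrightarrow> E v u) \<and> (\<forall>u. \<not> E u u)"

definition walk :: "('a \<Rightarrow> 'a \<Rightarrow> bool) \<Rightarrow> 'a list \<Rightarrow> bool" where
  "walk E xs \<longleftrightarrow> xs \<noteq> [] \<and> (\<forall>i. Suc i < length xs \<longrightarrow> E (xs ! i) (xs ! Suc i))"

definition connected_graph :: "'a set \<Rightarrow> ('a \<Rightarrow> 'a \<Rightarrow> bool) \<Rightarrow> bool" where
  "connected_graph V E \<longleftrightarrow> (\<forall>u\<in>V. \<forall>v\<in>V. \<exists>xs. walk E xs \<and> hd xs = u \<and> last xs = v)"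

definition gdist :: "('a \<Rightarrow> 'a \<Rightarrow> bool) \<Rightarrow> 'a \<Rightarrow> 'a \<Rightarrow> nat" where
  "gdist E u v = (LEAST k. \<exists>xs. walk E xs \<and> hd xs = u \<and> last xs = v \<and> length xs = Suc k)"

definition diam :: "'a set \<Rightarrow> ('a \<Rightarrow> 'a \<Rightarrow> bool) \<Rightarrow> nat" where
  "diam V E = Max {gdist E u v | u v. u \<in> V \<and> v \<in> V}"

definition nbhd :: "'a set \<Rightarrow> ('a \<Rightarrow> 'a \<Rightarrow> bool) \<Rightarrow> 'a \<Rightarrow> 'a set" where
  "nbhd V E u = {w \<in> V. E u w}"

definition twins :: "'a set \<Rightarrow> ('a \<Rightarrow> 'a \<Rightarrow> bool) \<Rightarrow> 'a \<Rightarrow> 'a \<Rightarrow> bool" where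
  "twins V E u v \<longleftrightarrow> nbhd V E u - {v} = nbhd V E v - {u}"

definition twin_number :: "'a set \<Rightarrow> ('a \<Rightarrow> 'a \<Rightarrow> bool) \<Rightarrow> nat" where
  "twin_number V E = Max {card {v \<in> V. twins V E u v} | u. u \<in> V}"

definition set_dist :: "('a \<Rightarrow> 'a \<Rightarrow> bool) \<Rightarrow> 'a \<Rightarrow> 'a set \<Rightarrow> nat" where
  "set_dist E u S = Min (gdist E u ` S)"

definition is_partition :: "'a set \<Rightarrow> 'a set set \<Rightarrow> bool" where
  "is_partition V P \<longleftrightarrow> \<Union>P = V \<and> {} \<notin> P \<and>
     (\<forall>S\<in>P. \<forall>T\<in>P. S \<noteq> T \<longrightarrow> S \<inter> T = {})"

text \<open>A partition is locating if the distance vectors r(u|P) are pairwise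
distinct, i.e. for distinct u, v some class S has d(u,S) \<noteq> d(v,S).\<close>

definition locating_partition :: "'a set \<Rightarrow> ('a \<Rightarrow> 'a \<Rightarrow> bool) \<Rightarrow> 'a set set \<Rightarrow> bool" where
  "locating_partition V E P \<longleftrightarrow> is_partition V P \<and>
     (\<forall>u\<in>V. \<forall>v\<in>V. u \<noteq> v \<longrightarrow> (\<exists>S\<in>P. set_dist E u S \<noteq> set_dist E v S))"

definition partition_dimension :: "'a set \<Rightarrow> ('a \<Rightarrow> 'a \<Rightarrow> bool) \<Rightarrow> nat" where
  "partition_dimension V E = (LEAST k. \<exists>P. locating_partition V E P \<and> card P = k)"

end

theory Submission
  imports Defs
begin

text \<open>
  If some vertex w has three neighbours a1, a2, a3 and three non-neighbours b1, b2, b3, the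
  pairs {ai, bi} together with singletons for all other vertices form a locating partition of
  size n - 3, every pair being split by the class {w}. Otherwise every vertex has at most two
  minority vertices: its neighbours if its degree is at most 2, its non-neighbours otherwise.
  A minority vertex d of a witness w is split from any vertex r outside the minority set of w, so
  it suffices to find three minority vertices of witnesses that, together with their minority
  sets, occupy at most six vertices. Vertices that are nobody's minority vertex are pairwise twins,
  so the twin bound leaves at least five minority vertices, and a case analysis on the degree
  types yields two witnesses covering three of them unless all minority sets are singletons.
  In that case diameter 2 and the twin bound rule out vertices of degree at most 2, the minority
  relation is a matching, and three of its edges provide the witnesses.
\<close>

lemma obtain_not_in_list:
  assumes "length xs < card A"
  obtains a where "a \<in> A" "a \<notin> set xs"
proof -
  have "\<not> A \<subseteq> set xs"
    using card_mono[OF finite_set, of A xs] card_length[of xs] assms by linarith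
  then show ?thesis
    using that by blast
qed

lemma walk_singleton [simp]: "walk E [x]"
  by (simp add: walk_def)

lemma walk_Cons_Cons [simp]: "walk E (x # y # xs) \<longleftrightarrow> E x y \<and> walk E (y # xs)"
  unfolding walk_def by (simp add: All_less_Suc2)

lemma gdist_le:
  assumes "walk E xs" "hd xs = u" "last xs = v" "length xs = Suc k"
  shows "gdist E u v \<le> k"
  unfolding gdist_def by (rule Least_le) (use assms in blast)

lemma shortest_walk_exists:
  assumes "connected_graph V E" "u \<in> V" "v \<in> V"
  obtains xs where "walk E xs" "hd xs = u" "last xs = v" "length xs = Suc (gdist E u v)"
proof -
  obtain xs where xs: "walk E xs" "hd xs = u" "last xs = v"
    using assms unfolding connected_graph_def by blast
  then have "length xs = Suc (length xs - 1)"
    by (simp add: walk_def)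
  with xs have "\<exists>k xs. walk E xs \<and> hd xs = u \<and> last xs = v \<and> length xs = Suc k"
    by blast
  then have "\<exists>xs. walk E xs \<and> hd xs = u \<and> last xs = v \<and> length xs = Suc (gdist E u v)"
    unfolding gdist_def by (rule LeastI_ex)
  then show ?thesis
    using that by blast
qed

lemma gdist_self [simp]: "gdist E u u = 0"
  using gdist_le[of E "[u]" u u 0] by simp

lemma gdist_eq_0_iff:
  assumes "connected_graph V E" "u \<in> V" "v \<in> V"
  shows "gdist E u v = 0 \<longleftrightarrow> u = v"
proof
  assume "gdist E u v = 0"
  moreover obtain xs where "walk E xs" "hd xs = u" "last xs = v" "length xs = Suc (gdist E u v)"
    using shortest_walk_exists[OF assms] .
  ultimately show "u = v"
    by (auto simp: length_Suc_conv)
qed simp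

lemma gdist_eq_1_iff:
  assumes "simple_graph V E" "connected_graph V E" "u \<in> V" "v \<in> V"
  shows "gdist E u v = 1 \<longleftrightarrow> E u v"
proof
  assume "gdist E u v = 1"
  moreover obtain xs where "walk E xs" "hd xs = u" "last xs = v" "length xs = Suc (gdist E u v)"
    using shortest_walk_exists[OF assms(2-4)] .
  ultimately show "E u v"
    by (auto simp: length_Suc_conv)
next
  assume "E u v"
  then have "gdist E u v \<le> 1" and "u \<noteq> v"
    using gdist_le[of E "[u, v]" u v 1] assms(1) by (auto simp: simple_graph_def)
  then show "gdist E u v = 1"
    using gdist_eq_0_iff[OF assms(2-4)] by linarith
qed

lemma gdist_le_diam:
  assumes "finite V" "u \<in> V" "v \<in> V"
  shows "gdist E u v \<le> diam V E"
proof -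
  have "{gdist E u v | u v. u \<in> V \<and> v \<in> V} = (\<lambda>(u, v). gdist E u v) ` (V \<times> V)"
    by auto
  then show ?thesis
    unfolding diam_def using assms by (intro Max_ge) auto
qed

lemma diam_2_adjacent_or_common_neighbour:
  assumes "simple_graph V E" "connected_graph V E" "diam V E = 2" "u \<in> V" "v \<in> V" "u \<noteq> v"
  shows "E u v \<or> (\<exists>m. E u m \<and> E m v)"
proof -
  obtain xs where xs: "walk E xs" "hd xs = u" "last xs = v" "length xs = Suc (gdist E u v)"
    using shortest_walk_exists[OF assms(2,4,5)] .
  have "gdist E u v \<le> 2"
    using gdist_le_diam[of V u v E] assms by (simp add: simple_graph_def)
  then have "length xs \<in> {2, 3}"
    using xs(4) gdist_eq_0_iff[OF assms(2,4,5)] assms(6) by auto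
  then show ?thesis
    using xs by (auto simp: length_Suc_conv numeral_3_eq_3 numeral_2_eq_2)
qed

lemma set_dist_singleton [simp]: "set_dist E u {w} = gdist E u w"
  by (simp add: set_dist_def)

lemma set_dist_eq_0:
  assumes "finite S" "u \<in> S"
  shows "set_dist E u S = 0"
proof -
  have "set_dist E u S \<le> gdist E u u"
    unfolding set_dist_def using assms by (intro Min_le imageI) auto
  then show ?thesis
    by simp
qed

lemma set_dist_neq_0:
  assumes "connected_graph V E" "finite S" "S \<noteq> {}" "S \<subseteq> V" "v \<in> V" "v \<notin> S"
  shows "set_dist E v S \<noteq> 0"
proof -
  have "set_dist E v S \<in> gdist E v ` S"
    unfolding set_dist_def using assms(2,3) by (intro Min_in) auto
  then obtain s where "s \<in> S" "set_dist E v S = gdist E v s"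
    by blast
  then show ?thesis
    using gdist_eq_0_iff[OF assms(1,5), of s] assms(4,6) by auto
qed

lemma is_partition_add_singletons:
  assumes "\<Union>Q \<subseteq> V" "{} \<notin> Q" "\<forall>S\<in>Q. \<forall>T\<in>Q. S \<noteq> T \<longrightarrow> S \<inter> T = {}"
  shows "is_partition V (Q \<union> (\<lambda>x. {x}) ` (V - \<Union>Q))"
  unfolding is_partition_def
proof (intro conjI ballI impI)
  show "\<Union>(Q \<union> (\<lambda>x. {x}) ` (V - \<Union>Q)) = V"
    using assms(1) by auto
  show "{} \<notin> Q \<union> (\<lambda>x. {x}) ` (V - \<Union>Q)"
    using assms(2) by auto
  fix S T assume "S \<in> Q \<union> (\<lambda>x. {x}) ` (V - \<Union>Q)" "T \<in> Q \<union> (\<lambda>x. {x}) ` (V - \<Union>Q)" "S \<noteq> T"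
  then show "S \<inter> T = {}"
    using assms(3) by auto
qed

lemma card_add_singletons:
  assumes "finite V" "\<Union>Q \<subseteq> V"
  shows "card (Q \<union> (\<lambda>x. {x}) ` (V - \<Union>Q)) = card Q + (card V - card (\<Union>Q))"
proof -
  have "finite Q"
    using assms by (metis finite_UnionD finite_subset)
  moreover have "Q \<inter> (\<lambda>x. {x}) ` (V - \<Union>Q) = {}"
    by blast
  moreover have "card ((\<lambda>x. {x}) ` (V - \<Union>Q)) = card V - card (\<Union>Q)"
    using assms by (simp add: card_image card_Diff_subset finite_subset)
  ultimately show ?thesis
    using assms(1) by (simp add: card_Un_disjoint)
qed

lemma locating_partitionI:
  assumes sg: "simple_graph V E" and conn: "connected_graph V E" and part: "is_partition V P"
    and sep: "\<And>S u v. S \<in> P \<Longrightarrow> u \<in> S \<Longrightarrow> v \<in> S \<Longrightarrow> u \<noteq> v \<Longrightarrow> \<exists>w. {w} \<in> P \<and> E w u \<noteq> E w v"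
  shows "locating_partition V E P"
  unfolding locating_partition_def
proof (intro conjI part ballI impI)
  fix u v assume u: "u \<in> V" and v: "v \<in> V" and "u \<noteq> v"
  obtain S where S: "S \<in> P" "u \<in> S"
    using part u unfolding is_partition_def by blast
  have "S \<subseteq> V"
    using S part unfolding is_partition_def by blast
  then have "finite S"
    using sg finite_subset unfolding simple_graph_def by blast
  show "\<exists>S\<in>P. set_dist E u S \<noteq> set_dist E v S"
  proof (cases "v \<in> S")
    case False
    then have "set_dist E v S \<noteq> 0"
      using S(2) by (intro set_dist_neq_0[OF conn \<open>finite S\<close> _ \<open>S \<subseteq> V\<close> v]) auto
    then show ?thesis
      using S(1) set_dist_eq_0[OF \<open>finite S\<close> S(2)] by (intro bexI[of _ S]) auto
  next
    case True
    then obtain w where w: "{w} \<in> P" "E w u \<noteq> E w v"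
      using sep S \<open>u \<noteq> v\<close> by blast
    have "w \<in> V"
      using w(1) part unfolding is_partition_def by blast
    have "E w u = E u w" "E w v = E v w"
      using sg unfolding simple_graph_def by blast+
    then have "gdist E u w \<noteq> gdist E v w"
      using w(2) gdist_eq_1_iff[OF sg conn u \<open>w \<in> V\<close>] gdist_eq_1_iff[OF sg conn v \<open>w \<in> V\<close>]
      by auto
    then show ?thesis
      using w(1) by force
  qed
qed

lemma partition_dimension_le_card:
  "locating_partition V E P \<Longrightarrow> partition_dimension V E \<le> card P"
  unfolding partition_dimension_def by (rule Least_le) blast

lemma partition_dimension_le_if_separated_pairs:
  assumes sg: "simple_graph V E" and conn: "connected_graph V E"
    and distinct: "distinct [a1, b1, a2, b2, a3, b3]" and sub: "{a1, b1, a2, b2, a3, b3} \<subseteq> V"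
    and w: "w1 \<in> V - {a1, b1, a2, b2, a3, b3}" "w2 \<in> V - {a1, b1, a2, b2, a3, b3}"
      "w3 \<in> V - {a1, b1, a2, b2, a3, b3}"
    and sep: "E w1 a1 \<noteq> E w1 b1" "E w2 a2 \<noteq> E w2 b2" "E w3 a3 \<noteq> E w3 b3"
  shows "partition_dimension V E \<le> card V - 3"
proof -
  define Q where "Q = {{a1, b1}, {a2, b2}, {a3, b3}}"
  define P where "P = Q \<union> (\<lambda>x. {x}) ` (V - \<Union>Q)"
  have UQ: "\<Union>Q = {a1, b1, a2, b2, a3, b3}"
    unfolding Q_def by auto
  have "is_partition V P"
    unfolding P_def using distinct sub
    by (intro is_partition_add_singletons) (auto simp: Q_def)
  moreover have "\<exists>w. {w} \<in> P \<and> E w u \<noteq> E w v"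
    if "S \<in> P" "u \<in> S" "v \<in> S" "u \<noteq> v" for S u v
  proof -
    have "{w1} \<in> P" "{w2} \<in> P" "{w3} \<in> P"
      using w unfolding P_def UQ by auto
    moreover have "S \<in> Q"
      using that unfolding P_def by auto
    ultimately show ?thesis
      using that sep unfolding Q_def by auto
  qed
  ultimately have "locating_partition V E P"
    by (rule locating_partitionI[OF sg conn])
  moreover have "card P = card V - 3"
  proof -
    have "card Q = 3" "card (\<Union>Q) = 6"
      using distinct unfolding UQ by (auto simp: Q_def doubleton_eq_iff)
    moreover have "card (\<Union>Q) \<le> card V"
      using sub sg unfolding UQ simple_graph_def by (intro card_mono) auto
    ultimately show ?thesis
      using card_add_singletons[of V Q] sg sub unfolding P_def UQ simple_graph_def by simp
  qed
  ultimately show ?thesis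
    using partition_dimension_le_card by metis
qed

definition covering_pair :: "('a \<Rightarrow> 'a \<Rightarrow> bool) \<Rightarrow> 'a \<Rightarrow> 'a \<Rightarrow> bool" where
  "covering_pair R w1 w2 \<longleftrightarrow> w1 \<noteq> w2 \<and> (\<exists>d1 d2 d3. distinct [d1, d2, d3] \<and>
     {d1, d2, d3} \<inter> {w1, w2} = {} \<and> (\<forall>d\<in>{d1, d2, d3}. R w1 d \<or> R w2 d))"

lemma ex_covering_pairI:
  assumes "w1 \<noteq> w2" "distinct [d1, d2, d3]" "{d1, d2, d3} \<inter> {w1, w2} = {}"
    and "R w1 d1 \<or> R w2 d1" "R w1 d2 \<or> R w2 d2" "R w1 d3 \<or> R w2 d3"
  shows "\<exists>w1 w2. covering_pair R w1 w2"
  unfolding covering_pair_def using assms by blast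

text \<open>
  Abstracts the minority relation of a graph in which no vertex has three neighbours and three
  non-neighbours; the type high is having degree at least 3.
\<close>

locale two_type_relation =
  fixes V :: "'a set" and R :: "'a \<Rightarrow> 'a \<Rightarrow> bool" and high :: "'a \<Rightarrow> bool"
  assumes R_in: "\<And>x y. R x y \<Longrightarrow> x \<in> V \<and> y \<in> V \<and> x \<noteq> y"
    and out_degree_le_2: "\<And>x a b c. R x a \<Longrightarrow> R x b \<Longrightarrow> R x c \<Longrightarrow> a = b \<or> a = c \<or> b = c"
    and same_type_sym: "\<And>x y. R x y \<Longrightarrow> high x = high y \<Longrightarrow> R y x"
    and opposite_type_asym: "\<And>x y. x \<in> V \<Longrightarrow> y \<in> V \<Longrightarrow> x \<noteq> y \<Longrightarrow> high x \<noteq> high y \<Longrightarrow> R x y \<longleftrightarrow> \<not> R y x"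
    and card_targets: "5 \<le> card {y. \<exists>x. R x y}"
begin

lemma R_irrefl: "R x y \<Longrightarrow> x \<noteq> y"
  using R_in by blast

lemma target_outside:
  assumes "length xs \<le> 4"
  obtains x y where "R x y" "y \<notin> set xs"
  using obtain_not_in_list[of xs "{y. \<exists>x. R x y}"] assms card_targets that by auto

lemma covering_pair_via_predecessor:
  assumes va: "R v a" and vb: "R v b" and ab: "a \<noteq> b"
    and ac: "R a c" and bc': "R b c'" and c: "c \<notin> {a, b, v}" "c' \<notin> {a, b, v, c}"
    and xv: "R x v" "x \<notin> {a, b, c, c'}" and types: "high x \<noteq> high c"
  shows "\<exists>w1 w2. covering_pair R w1 w2"
proof -
  have v_neq: "v \<noteq> a" "v \<noteq> b" "x \<noteq> v"
    using R_irrefl va vb xv by blast+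
  consider "R x c" | "R x c'" | "R c x"
    using opposite_type_asym[of x c] R_in xv ac types by blast
  then show ?thesis
  proof cases
    case 1
    then show ?thesis
      using xv bc' c v_neq by (intro ex_covering_pairI[of x b v c c']) auto
  next
    case 2
    then show ?thesis
      using xv ac c v_neq by (intro ex_covering_pairI[of x a v c' c]) auto
  next
    case 3
    then show ?thesis
      using va vb ab xv c v_neq by (intro ex_covering_pairI[of v c a b x]) auto
  qed
qed

lemma covering_pair_opposite_types:
  assumes va: "R v a" and vb: "R v b" and ab: "a \<noteq> b"
    and out_v: "\<And>y. R v y \<Longrightarrow> y = a \<or> y = b"
    and ac: "R a c" and bc': "R b c'" and c: "c \<notin> {a, b, v}" "c' \<notin> {a, b, v, c}"
    and not_av: "\<not> R a v" "\<not> R b v" and xv: "R x v" "x \<notin> {a, b}"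
  shows "\<exists>w1 w2. covering_pair R w1 w2"
proof -
  have in_V: "c \<in> V" "c' \<in> V" "v \<in> V"
    using R_in vb ac bc' by blast+
  have v_neq: "v \<noteq> a" "v \<noteq> b"
    using R_irrefl va vb by blast+
  have not_vx: "\<not> R v x" "\<not> R v c" "\<not> R v c'"
    using out_v xv c by blast+
  have high_v: "high v \<noteq> high a" "high v \<noteq> high b" "high x \<noteq> high v"
    using same_type_sym va vb xv not_av not_vx by metis+
  consider "high c = high a" | "high c' = high b" | "high c \<noteq> high a" "high c' \<noteq> high b"
    by blast
  then show ?thesis
  proof cases
    case 1
    have "R c a"
      using same_type_sym[OF ac] 1 by simp
    moreover have "R c v"
      using opposite_type_asym[of c v] 1 high_v in_V c not_vx by auto
    ultimately show ?thesis
      using ab bc' c v_neq by (intro ex_covering_pairI[of c b a v c']) auto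
  next
    case 2
    have "R c' b"
      using same_type_sym[OF bc'] 2 by simp
    moreover have "R c' v"
      using opposite_type_asym[of c' v] 2 high_v in_V c not_vx by auto
    ultimately show ?thesis
      using ab ac c v_neq by (intro ex_covering_pairI[of c' a b v c]) auto
  next
    case 3
    \<comment> \<open>then a, b, x have one type and v, c, c' the other\<close>
    then have "high x \<noteq> high c" "high x \<noteq> high c'"
      using high_v by (metis (full_types))+
    then have "x \<notin> {a, b, c, c'}"
      using xv(2) by auto
    then show ?thesis
      using covering_pair_via_predecessor[OF va vb ab ac bc' c xv(1)] \<open>high x \<noteq> high c\<close> by blast
  qed
qed

lemma covering_pair_crossing:
  assumes va: "R v a" and vb: "R v b" and ab: "a \<noteq> b"
    and out_v: "\<And>y. R v y \<Longrightarrow> y = a \<or> y = b"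
    and closed: "\<And>x y. R x y \<Longrightarrow> y \<notin> {a, b, v} \<Longrightarrow> x = a \<or> x = b"
    and ac: "R a c" and bc': "R b c'" and c: "c \<notin> {a, b, v}" "c' \<notin> {a, b, v, c}"
    and not_av: "\<not> R a v" "\<not> R b v"
  shows "\<exists>w1 w2. covering_pair R w1 w2"
proof -
  have v_neq: "v \<noteq> a" "v \<noteq> b"
    using R_irrefl va vb by blast+
  obtain x y where xy: "R x y" "y \<notin> {a, b, c, c'}"
    using target_outside[of "[a, b, c, c']"] by auto
  consider "y \<noteq> v" "x = a" | "y \<noteq> v" "x = b" | "y = v"
    using closed xy by blast
  then show ?thesis
  proof cases
    case 1
    then show ?thesis
      using va vb ab ac c xy v_neq by (intro ex_covering_pairI[of v a b c y]) auto
  next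
    case 2
    then show ?thesis
      using va vb ab bc' c xy v_neq by (intro ex_covering_pairI[of v b a c' y]) auto
  next
    case 3
    then show ?thesis
      using covering_pair_opposite_types[OF va vb ab out_v ac bc' c] not_av xy by auto
  qed
qed

lemma covering_pair_closed:
  assumes va: "R v a" and vb: "R v b" and ab: "a \<noteq> b"
    and out_v: "\<And>y. R v y \<Longrightarrow> y = a \<or> y = b"
    and closed: "\<And>x y. R x y \<Longrightarrow> y \<notin> {a, b, v} \<Longrightarrow> x = a \<or> x = b"
    and ac: "R a c" and c: "c \<notin> {a, b, v}"
  shows "\<exists>w1 w2. covering_pair R w1 w2"
proof -
  have v_neq: "v \<noteq> a" "v \<noteq> b"
    using R_irrefl va vb by blast+
  obtain x' c' where c': "R x' c'" "c' \<notin> {a, b, v, c}"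
    using target_outside[of "[a, b, v, c]"] by auto
  consider "x' = a" | "R b c'"
    using closed c' by blast
  then show ?thesis
  proof cases
    case 1
    then show ?thesis
      using va vb ab ac c c' v_neq by (intro ex_covering_pairI[of v a b c c']) auto
  next
    case 2
    show ?thesis
    proof (cases "R a v \<or> R b v")
      case True
      then show ?thesis
        using ab ac 2 c c' v_neq by (intro ex_covering_pairI[of a b c c' v]) auto
    next
      case False
      then show ?thesis
        by (intro covering_pair_crossing[OF va vb ab out_v _ ac 2 c c'(2)]) (use closed in auto)
    qed
  qed
qed

lemma covering_pair_exists:
  assumes va: "R v a" and vb: "R v b" and ab: "a \<noteq> b"
  shows "\<exists>w1 w2. covering_pair R w1 w2"
proof -
  have out_v: "\<And>y. R v y \<Longrightarrow> y = a \<or> y = b"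
    using out_degree_le_2[OF va vb] ab by blast
  show ?thesis
  proof (cases "\<exists>x y. R x y \<and> y \<notin> {a, b, v} \<and> x \<notin> {a, b}")
    case True
    then obtain x y where xy: "R x y" "y \<notin> {a, b, v}" "x \<notin> {a, b}"
      by blast
    then show ?thesis
      using va vb ab out_v R_irrefl by (intro ex_covering_pairI[of v x a b y]) auto
  next
    case False
    then have closed: "\<And>x y. R x y \<Longrightarrow> y \<notin> {a, b, v} \<Longrightarrow> x = a \<or> x = b"
      by blast
    obtain x c where c: "R x c" "c \<notin> {a, b, v}"
      using target_outside[of "[a, b, v]"] by auto
    consider "R a c" | "R b c"
      using closed c by blast
    then show ?thesis
    proof cases
      case 1
      show ?thesis
        by (rule covering_pair_closed[OF va vb ab out_v]) (use closed 1 c in auto)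
    next
      case 2
      show ?thesis
        by (rule covering_pair_closed[OF vb va ab[symmetric]]) (use out_v closed 2 c in auto)
    qed
  qed
qed

end

definition high_degree :: "'a set \<Rightarrow> ('a \<Rightarrow> 'a \<Rightarrow> bool) \<Rightarrow> 'a \<Rightarrow> bool" where
  "high_degree V E w \<longleftrightarrow> 2 < card (nbhd V E w)"

definition minority :: "'a set \<Rightarrow> ('a \<Rightarrow> 'a \<Rightarrow> bool) \<Rightarrow> 'a \<Rightarrow> 'a \<Rightarrow> bool" where
  "minority V E x y \<longleftrightarrow> x \<in> V \<and> y \<in> V \<and> x \<noteq> y \<and> E x y \<noteq> high_degree V E x"

lemma minority_in: "minority V E x y \<Longrightarrow> x \<in> V \<and> y \<in> V \<and> x \<noteq> y"
  by (simp add: minority_def)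

lemma finite_minority_targets:
  "finite V \<Longrightarrow> finite {y. \<exists>x\<in>W. minority V E x y}"
  by (rule finite_subset[of _ V]) (auto simp: minority_def)

lemma card_le_twin_number:
  assumes "finite V" "s \<in> V" "S \<subseteq> V" "\<And>t. t \<in> S \<Longrightarrow> twins V E s t"
  shows "card S \<le> twin_number V E"
proof -
  have "card S \<le> card {t \<in> V. twins V E s t}"
    using assms by (intro card_mono) auto
  also have "\<dots> \<le> twin_number V E"
    unfolding twin_number_def using assms(1,2) by (intro Max_ge) auto
  finally show ?thesis .
qed

lemma twins_if_not_minority_targets:
  assumes sg: "simple_graph V E" and "u \<in> V" "v \<in> V"
    and "\<And>x. \<not> minority V E x u" "\<And>x. \<not> minority V E x v"
  shows "twins V E u v"
proof -
  have "E u y \<longleftrightarrow> E v y" if "y \<in> V" "y \<noteq> u" "y \<noteq> v" for y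
  proof -
    have "E y u \<longleftrightarrow> E y v"
      using assms(2-5) that unfolding minority_def by blast
    then show ?thesis
      using sg unfolding simple_graph_def by blast
  qed
  moreover have "\<not> E u u" "\<not> E v v"
    using sg unfolding simple_graph_def by blast+
  ultimately have "y \<in> nbhd V E u - {v} \<longleftrightarrow> y \<in> nbhd V E v - {u}" for y
    unfolding nbhd_def by blast
  then show ?thesis
    unfolding twins_def by blast
qed

lemma card_minority_targets_ge_5:
  assumes sg: "simple_graph V E" and n: "card V \<ge> 9" and twin: "2 * twin_number V E \<le> card V"
  shows "5 \<le> card {y. \<exists>x. minority V E x y}"
proof -
  let ?Y = "{y. \<exists>x. minority V E x y}"
  have "finite (?Y \<union> (V - ?Y))"
    using sg finite_minority_targets[of V UNIV E] by (simp add: simple_graph_def)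
  then have "card V \<le> card (?Y \<union> (V - ?Y))"
    by (rule card_mono) blast
  also have "\<dots> \<le> card ?Y + card (V - ?Y)"
    by (rule card_Un_le)
  finally have "card V \<le> card ?Y + card (V - ?Y)" .
  moreover have "card (V - ?Y) \<le> twin_number V E"
  proof (cases "V - ?Y = {}")
    case False
    then obtain u where u: "u \<in> V - ?Y"
      by blast
    have "twins V E u t" if "t \<in> V - ?Y" for t
      using u that by (intro twins_if_not_minority_targets[OF sg]) auto
    then show ?thesis
      using u sg card_le_twin_number[of V u "V - ?Y"] unfolding simple_graph_def by blast
  qed (metis card.empty zero_le)
  ultimately show ?thesis
    using n twin by linarith
qed

lemma minority_separates:
  assumes "minority V E w d" "r \<in> V" "r \<noteq> w" "\<not> minority V E w r"
  shows "E w d \<noteq> E w r"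
  using assms unfolding minority_def by blast

lemma partition_dimension_le_if_minority_cover:
  assumes sg: "simple_graph V E" and conn: "connected_graph V E" and n: "card V \<ge> 9"
    and W: "finite W" "card (W \<union> {y. \<exists>w\<in>W. minority V E w y}) \<le> 6"
    and d: "distinct [d1, d2, d3]" "{d1, d2, d3} \<inter> W = {}"
    and cover: "\<forall>d\<in>{d1, d2, d3}. \<exists>w\<in>W. minority V E w d"
  shows "partition_dimension V E \<le> card V - 3"
proof -
  let ?A = "W \<union> {y. \<exists>w\<in>W. minority V E w y}"
  have "finite V"
    using sg by (simp add: simple_graph_def)
  then have "finite ?A"
    using W(1) finite_minority_targets[of V W E] by blast
  then have "card V - card ?A \<le> card (V - ?A)"
    by (rule diff_card_le_card_Diff)
  then have "3 \<le> card (V - ?A)"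
    using W(2) n by linarith
  then obtain R where "R \<subseteq> V - ?A" "card R = 3"
    by (meson obtain_subset_with_card_n)
  then obtain r1 r2 r3 where r: "distinct [r1, r2, r3]" "{r1, r2, r3} \<subseteq> V - ?A"
    unfolding card_3_iff by auto
  obtain w1 w2 w3 where w: "w1 \<in> W" "w2 \<in> W" "w3 \<in> W"
    "minority V E w1 d1" "minority V E w2 d2" "minority V E w3 d3"
    using cover by auto
  have dA: "d1 \<in> ?A" "d2 \<in> ?A" "d3 \<in> ?A"
    using w by blast+
  have V: "{d1, d2, d3, w1, w2, w3} \<subseteq> V"
    using minority_in[OF w(4)] minority_in[OF w(5)] minority_in[OF w(6)] by blast
  have sep: "E w1 d1 \<noteq> E w1 r1" "E w2 d2 \<noteq> E w2 r2" "E w3 d3 \<noteq> E w3 r3"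
    using minority_separates[OF w(4), of r1] minority_separates[OF w(5), of r2]
      minority_separates[OF w(6), of r3] w(1-3) r(2) by blast+
  have "distinct [d1, r1, d2, r2, d3, r3]"
    using d(1) r dA by auto
  moreover have "{d1, r1, d2, r2, d3, r3} \<subseteq> V"
    using V r(2) by blast
  moreover have "w1 \<in> V - {d1, r1, d2, r2, d3, r3}" "w2 \<in> V - {d1, r1, d2, r2, d3, r3}"
    "w3 \<in> V - {d1, r1, d2, r2, d3, r3}"
    using V w(1-3) r(2) d(2) by blast+
  ultimately show ?thesis
    using partition_dimension_le_if_separated_pairs[OF sg conn _ _ _ _ _ sep] by blast
qed

lemma partition_dimension_le_if_covering_pair:
  assumes sg: "simple_graph V E" and conn: "connected_graph V E" and n: "card V \<ge> 9"
    and out_degree: "\<And>w. card {y. minority V E w y} \<le> 2"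
    and pair: "covering_pair (minority V E) w1 w2"
  shows "partition_dimension V E \<le> card V - 3"
proof -
  obtain d1 d2 d3 where d: "distinct [d1, d2, d3]" "{d1, d2, d3} \<inter> {w1, w2} = {}"
    "\<forall>d\<in>{d1, d2, d3}. minority V E w1 d \<or> minority V E w2 d"
    using pair unfolding covering_pair_def by blast
  have "{w1, w2} \<union> {y. \<exists>w\<in>{w1, w2}. minority V E w y} =
      {w1, w2} \<union> {y. minority V E w1 y} \<union> {y. minority V E w2 y}"
    by auto
  also have "card \<dots> \<le> card {w1, w2} + card {y. minority V E w1 y} + card {y. minority V E w2 y}"
    by (metis card_Un_le add_le_mono1 le_trans)
  also have "\<dots> \<le> 6"
    using out_degree[of w1] out_degree[of w2] card_length[of "[w1, w2]"] by simp
  finally have "card ({w1, w2} \<union> {y. \<exists>w\<in>{w1, w2}. minority V E w y}) \<le> 6" .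
  with finite.emptyI[THEN finite.insertI, THEN finite.insertI] show ?thesis
    by (rule partition_dimension_le_if_minority_cover[OF sg conn n _ _ d(1)]) (use d(2,3) in auto)
qed

lemma two_type_relation_minority:
  assumes sg: "simple_graph V E" and n: "card V \<ge> 9" and twin: "2 * twin_number V E \<le> card V"
    and out_degree: "\<And>w. card {y. minority V E w y} \<le> 2"
  shows "two_type_relation V (minority V E) (high_degree V E)"
proof
  have "finite V"
    using sg by (simp add: simple_graph_def)
  show "\<And>x y. minority V E x y \<Longrightarrow> x \<in> V \<and> y \<in> V \<and> x \<noteq> y"
    by (rule minority_in)
  show "a = b \<or> a = c \<or> b = c"
    if "minority V E x a" "minority V E x b" "minority V E x c" for x a b c
  proof (rule ccontr)
    assume "\<not> (a = b \<or> a = c \<or> b = c)"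
    then have "card {a, b, c} = 3"
      by simp
    moreover have "card {a, b, c} \<le> card {y. minority V E x y}"
      using that finite_minority_targets[of V "{x}" E] \<open>finite V\<close> by (intro card_mono) auto
    ultimately show False
      using out_degree[of x] by simp
  qed
  have sym: "E x y \<longleftrightarrow> E y x" for x y
    using sg by (auto simp: simple_graph_def)
  show "\<And>x y. minority V E x y \<Longrightarrow> high_degree V E x = high_degree V E y \<Longrightarrow> minority V E y x"
    unfolding minority_def using sym by metis
  show "\<And>x y. x \<in> V \<Longrightarrow> y \<in> V \<Longrightarrow> x \<noteq> y \<Longrightarrow> high_degree V E x \<noteq> high_degree V E y \<Longrightarrow>
      minority V E x y \<longleftrightarrow> \<not> minority V E y x"
    unfolding minority_def using sym by auto
  show "5 \<le> card {y. \<exists>x. minority V E x y}"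
    by (rule card_minority_targets_ge_5[OF sg n twin])
qed

lemma has_neighbour:
  assumes sg: "simple_graph V E" and conn: "connected_graph V E" and dm: "diam V E = 2"
    and n: "card V \<ge> 2" and u: "u \<in> V"
  obtains z where "E u z"
proof -
  obtain t where "t \<in> V" "t \<notin> set [u]"
    using obtain_not_in_list[of "[u]" V] n by auto
  then show ?thesis
    using diam_2_adjacent_or_common_neighbour[OF sg conn dm u] that by auto
qed

lemma pendant_vertices_common_neighbour:
  assumes sg: "simple_graph V E" and conn: "connected_graph V E" and dm: "diam V E = 2"
    and n: "card V \<ge> 3" and s: "s \<in> V" "s' \<in> V" "s \<noteq> s'"
    and pendant: "\<And>y y'. E s y \<Longrightarrow> E s y' \<Longrightarrow> y = y'" "\<And>y y'. E s' y \<Longrightarrow> E s' y' \<Longrightarrow> y = y'"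
    and t: "E s t"
  shows "E s' t"
proof -
  have sym: "E x y \<Longrightarrow> E y x" for x y
    using sg by (simp add: simple_graph_def)
  consider "E s s'" | m where "E s m" "E m s'"
    using diam_2_adjacent_or_common_neighbour[OF sg conn dm s] by blast
  then show ?thesis
  proof cases
    case 1
    then have "s' = t"
      using pendant(1) t by blast
    obtain w where w: "w \<in> V" "w \<notin> set [s, s']"
      using obtain_not_in_list[of "[s, s']" V] n by auto
    then consider "E s w" | m where "E s m" "E m w"
      using diam_2_adjacent_or_common_neighbour[OF sg conn dm s(1)] by auto
    then have False
    proof cases
      case 1
      then show False
        using pendant(1) t \<open>s' = t\<close> w(2) by auto
    next
      case 2
      then have "E s' w"
        using pendant(1) t \<open>s' = t\<close> by blast
      moreover have "E s' s"
        using \<open>E s s'\<close> sym by blast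
      ultimately show False
        using pendant(2) w(2) by auto
    qed
    then show ?thesis ..
  next
    case 2
    then show ?thesis
      using pendant(1) t sym by blast
  qed
qed

lemma twins_if_pendant:
  assumes sg: "simple_graph V E" and conn: "connected_graph V E" and dm: "diam V E = 2"
    and n: "card V \<ge> 3" and s: "s \<in> V" "s' \<in> V"
    and pendant: "\<And>y y'. E s y \<Longrightarrow> E s y' \<Longrightarrow> y = y'" "\<And>y y'. E s' y \<Longrightarrow> E s' y' \<Longrightarrow> y = y'"
  shows "twins V E s s'"
proof (cases "s = s'")
  case False
  obtain t where t: "E s t"
    using has_neighbour[OF sg conn dm _ s(1)] n by fastforce
  then have "E s' t"
    using pendant_vertices_common_neighbour[OF sg conn dm n s False pendant] by blast
  then have "nbhd V E s = {t}" "nbhd V E s' = {t}" and "t \<noteq> s" "t \<noteq> s'"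
    using t pendant sg unfolding nbhd_def simple_graph_def by blast+
  then show ?thesis
    unfolding twins_def by auto
qed (simp add: twins_def)

lemma twin_class_not_cofinite:
  assumes "finite V" "card V \<ge> 5" "2 * twin_number V E \<le> card V" "s \<in> V"
    and twins: "\<And>t. t \<in> V - {a, b} \<Longrightarrow> twins V E s t"
  shows False
proof -
  have "card V - 2 \<le> card (V - {a, b})"
    using diff_card_le_card_Diff[of "{a, b}" V] card_length[of "[a, b]"] by simp
  also have "\<dots> \<le> twin_number V E"
    using assms by (intro card_le_twin_number) auto
  finally show False
    using assms(2,3) by linarith
qed

lemma not_two_low_vertices_if_minority_functional:
  assumes sg: "simple_graph V E" and conn: "connected_graph V E" and dm: "diam V E = 2"
    and n: "card V \<ge> 9" and twin: "2 * twin_number V E \<le> card V"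
    and functional: "\<forall>v a b. minority V E v a \<longrightarrow> minority V E v b \<longrightarrow> a = b"
    and u: "u \<in> V" "u' \<in> V" "u \<noteq> u'" "\<not> high_degree V E u" "\<not> high_degree V E u'"
  shows False
proof -
  have unique: "y = y'" if "s \<in> V" "\<not> high_degree V E s" "E s y" "E s y'" for s y y'
    using functional[rule_format, of s y y'] that sg unfolding minority_def simple_graph_def by blast
  have finite: "finite V" and sym: "\<And>x y. E x y \<Longrightarrow> E y x"
    using sg by (auto simp: simple_graph_def)
  have n2: "card V \<ge> 2"
    using n by linarith
  obtain z z' where z: "E u z" "E u' z'"
    using has_neighbour[OF sg conn dm n2 u(1)] has_neighbour[OF sg conn dm n2 u(2)] by metis
  have low: "\<not> high_degree V E h" if "h \<in> V - {z, z'}" for h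
  proof
    assume high: "high_degree V E h"
    have "\<not> E h u" "\<not> E h u'"
      using unique[OF u(1) u(4) _ z(1)] unique[OF u(2) u(5) _ z(2)] sym that by blast+
    moreover have "h \<noteq> u" "h \<noteq> u'"
      using high u(4,5) by blast+
    ultimately have "minority V E h u" "minority V E h u'"
      using high that u(1,2) unfolding minority_def by auto
    then show False
      using functional u(3) by blast
  qed
  obtain s where s: "s \<in> V" "s \<notin> set [z, z']"
    using obtain_not_in_list[of "[z, z']" V] n by auto
  have pendant: "y = y'" if "x \<in> V - {z, z'}" "E x y" "E x y'" for x y y'
    using unique low that by blast
  have "card V \<ge> 3"
    using n by linarith
  then have "twins V E s s'" if "s' \<in> V - {z, z'}" for s'
    using that s by (intro twins_if_pendant[OF sg conn dm]) (auto intro: pendant)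
  then show False
    using twin_class_not_cofinite[OF finite _ twin s(1)] n by auto
qed

lemma not_one_low_vertex_if_minority_functional:
  assumes sg: "simple_graph V E" and conn: "connected_graph V E" and dm: "diam V E = 2"
    and n: "card V \<ge> 9" and twin: "2 * twin_number V E \<le> card V"
    and functional: "\<forall>v a b. minority V E v a \<longrightarrow> minority V E v b \<longrightarrow> a = b"
    and u: "u \<in> V" "\<not> high_degree V E u" and high: "\<And>h. h \<in> V - {u} \<Longrightarrow> high_degree V E h"
  shows False
proof -
  have finite: "finite V" and sym: "\<And>x y. E x y \<Longrightarrow> E y x" and irrefl: "\<And>x. \<not> E x x"
    using sg by (auto simp: simple_graph_def)
  obtain z where z: "E u z"
    using has_neighbour[OF sg conn dm _ u(1)] n by fastforce
  have nbhd: "nbhd V E h = V - {h, u}" if h: "h \<in> V - {u, z}" for h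
  proof -
    have "\<not> E h u"
      using functional u z sym h sg unfolding minority_def simple_graph_def by blast
    then have "minority V E h u"
      using high[of h] h u(1) unfolding minority_def by auto
    then have "E h y" if "y \<in> V - {h, u}" for y
      using functional[rule_format, of h u y] high[of h] h that unfolding minority_def by auto
    then show ?thesis
      using \<open>\<not> E h u\<close> irrefl sg unfolding nbhd_def simple_graph_def by blast
  qed
  obtain s where s: "s \<in> V" "s \<notin> set [u, z]"
    using obtain_not_in_list[of "[u, z]" V] n by auto
  have "twins V E s t" if "t \<in> V - {u, z}" for t
    unfolding twins_def using nbhd[OF that] nbhd[of s] s by auto
  then show False
    using twin_class_not_cofinite[OF finite _ twin s(1)] n by auto
qed

lemma all_high_degree_if_minority_functional:
  assumes sg: "simple_graph V E" and conn: "connected_graph V E" and dm: "diam V E = 2"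
    and n: "card V \<ge> 9" and twin: "2 * twin_number V E \<le> card V"
    and functional: "\<forall>v a b. minority V E v a \<longrightarrow> minority V E v b \<longrightarrow> a = b"
    and u: "u \<in> V"
  shows "high_degree V E u"
proof (rule ccontr)
  assume low: "\<not> high_degree V E u"
  show False
  proof (cases "\<exists>u'\<in>V - {u}. \<not> high_degree V E u'")
    case True
    then show False
      using not_two_low_vertices_if_minority_functional[OF sg conn dm n twin functional u _ _ low] by blast
  next
    case False
    then show False
      using not_one_low_vertex_if_minority_functional[OF sg conn dm n twin functional u low] by blast
  qed
qed

lemma partition_dimension_le_if_three_minority_pairs:
  assumes sg: "simple_graph V E" and conn: "connected_graph V E" and n: "card V \<ge> 9"
    and functional: "\<forall>v a b. minority V E v a \<longrightarrow> minority V E v b \<longrightarrow> a = b"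
    and m: "minority V E p1 y1" "minority V E p2 y2" "minority V E p3 y3"
    and y: "distinct [y1, y2, y3]" "{y1, y2, y3} \<inter> {p1, p2, p3} = {}"
  shows "partition_dimension V E \<le> card V - 3"
proof -
  let ?A = "{p1, p2, p3} \<union> {y. \<exists>w\<in>{p1, p2, p3}. minority V E w y}"
  have "?A \<subseteq> set [p1, p2, p3, y1, y2, y3]"
    using functional[rule_format, OF m(1)] functional[rule_format, OF m(2)]
      functional[rule_format, OF m(3)]
    by (simp only: set_simps) blast
  then have "card ?A \<le> card (set [p1, p2, p3, y1, y2, y3])"
    by (rule card_mono[OF finite_set])
  also have "\<dots> \<le> 6"
    using card_length[of "[p1, p2, p3, y1, y2, y3]"] by simp
  finally have "card ?A \<le> 6" .
  moreover have "\<forall>d\<in>{y1, y2, y3}. \<exists>w\<in>{p1, p2, p3}. minority V E w d"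
    using m by blast
  ultimately show ?thesis
    using partition_dimension_le_if_minority_cover[OF sg conn n _ _ y] by blast
qed

lemma partition_dimension_le_if_minority_matching:
  assumes sg: "simple_graph V E" and conn: "connected_graph V E"
    and n: "card V \<ge> 9" and twin: "2 * twin_number V E \<le> card V"
    and functional: "\<forall>v a b. minority V E v a \<longrightarrow> minority V E v b \<longrightarrow> a = b"
    and high: "\<forall>u\<in>V. high_degree V E u"
  shows "partition_dimension V E \<le> card V - 3"
proof -
  let ?Y = "{y. \<exists>x. minority V E x y}"
  have sym: "minority V E y x" if "minority V E x y" for x y
    using that high sg unfolding minority_def simple_graph_def by metis
  have target_outside: "\<exists>x y. minority V E x y \<and> y \<notin> set xs" if "length xs \<le> 4" for xs
    by (rule obtain_not_in_list[of xs ?Y]) (use card_minority_targets_ge_5[OF sg n twin] that in auto)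
  obtain y1 p1 where 1: "minority V E p1 y1"
    using target_outside[of "[]"] by auto
  obtain y2 p2 where 2: "minority V E p2 y2" "y2 \<notin> {y1, p1}"
    using target_outside[of "[y1, p1]"] by auto
  obtain y3 p3 where 3: "minority V E p3 y3" "y3 \<notin> {y1, p1, y2, p2}"
    using target_outside[of "[y1, p1, y2, p2]"] by auto
  have "y1 \<noteq> p2" "y1 \<noteq> p3" "y2 \<noteq> p3"
    using functional[rule_format, OF sym[OF 1(1)], of y2] functional[rule_format, OF sym[OF 1(1)], of y3]
      functional[rule_format, OF sym[OF 2(1)], of y3] 2 3 by auto
  moreover have "y1 \<noteq> p1" "y2 \<noteq> p2" "y3 \<noteq> p3"
    using minority_in[OF 1] minority_in[OF 2(1)] minority_in[OF 3(1)] by blast+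
  ultimately have "{y1, y2, y3} \<inter> {p1, p2, p3} = {}"
    using 2(2) 3(2) by blast
  moreover have "distinct [y1, y2, y3]"
    using 2(2) 3(2) by auto
  ultimately show ?thesis
    using partition_dimension_le_if_three_minority_pairs[OF sg conn n functional 1 2(1) 3(1)] by blast
qed

lemma partition_dimension_le_if_balanced_vertex:
  assumes sg: "simple_graph V E" and conn: "connected_graph V E" and w: "w \<in> V"
    and "3 \<le> card (nbhd V E w)" "3 \<le> card (V - nbhd V E w - {w})"
  shows "partition_dimension V E \<le> card V - 3"
proof -
  obtain A B where A: "A \<subseteq> nbhd V E w" "card A = 3" and B: "B \<subseteq> V - nbhd V E w - {w}" "card B = 3"
    using assms(4,5) by (meson obtain_subset_with_card_n)
  obtain a1 a2 a3 b1 b2 b3 where "A = {a1, a2, a3}" "distinct [a1, a2, a3]"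
    "B = {b1, b2, b3}" "distinct [b1, b2, b3]"
    using A(2) B(2) unfolding card_3_iff by auto
  moreover have "\<not> E w w"
    using sg by (simp add: simple_graph_def)
  ultimately show ?thesis
    using A(1) B(1) w unfolding nbhd_def
    by (intro partition_dimension_le_if_separated_pairs[OF sg conn, of a1 b1 a2 b2 a3 b3 w w w]) auto
qed

lemma card_minority_le_2:
  assumes sg: "simple_graph V E"
    and unbalanced: "\<not> (\<exists>w\<in>V. 3 \<le> card (nbhd V E w) \<and> 3 \<le> card (V - nbhd V E w - {w}))"
  shows "card {y. minority V E w y} \<le> 2"
proof (cases "w \<in> V")
  case True
  have "{y. minority V E w y} = (if high_degree V E w then V - nbhd V E w - {w} else nbhd V E w)"
    using sg True unfolding minority_def nbhd_def simple_graph_def by auto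
  then show ?thesis
    using True unbalanced unfolding high_degree_def by auto
qed (simp add: minority_def)

lemma partition_dimension_le_if_unbalanced:
  assumes sg: "simple_graph V E" and conn: "connected_graph V E" and dm: "diam V E = 2"
    and n: "card V \<ge> 9" and twin: "2 * twin_number V E \<le> card V"
    and unbalanced: "\<not> (\<exists>w\<in>V. 3 \<le> card (nbhd V E w) \<and> 3 \<le> card (V - nbhd V E w - {w}))"
  shows "partition_dimension V E \<le> card V - 3"
proof -
  have out_degree: "\<And>w. card {y. minority V E w y} \<le> 2"
    by (rule card_minority_le_2[OF sg unbalanced])
  then interpret two_type_relation V "minority V E" "high_degree V E"
    by (rule two_type_relation_minority[OF sg n twin])
  show ?thesis
  proof (cases "\<exists>v a b. minority V E v a \<and> minority V E v b \<and> a \<noteq> b")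
    case True
    then obtain w1 w2 where "covering_pair (minority V E) w1 w2"
      using covering_pair_exists by blast
    then show ?thesis
      by (rule partition_dimension_le_if_covering_pair[OF sg conn n out_degree])
  next
    case False
    then have functional: "\<forall>v a b. minority V E v a \<longrightarrow> minority V E v b \<longrightarrow> a = b"
      by blast
    show ?thesis
      using partition_dimension_le_if_minority_matching[OF sg conn n twin functional]
        all_high_degree_if_minority_functional[OF sg conn dm n twin functional] by blast
  qed
qed

theorem proposition13:
  fixes V :: "'a set" and E :: "'a \<Rightarrow> 'a \<Rightarrow> bool"
  assumes "simple_graph V E"
    and "connected_graph V E"
    and "card V \<ge> 9"
    and "2 * twin_number V E \<le> card V"
    and "diam V E = 2"
  shows "partition_dimension V E \<le> card V - 3"
proof (cases "\<exists>w\<in>V. 3 \<le> card (nbhd V E w) \<and> 3 \<le> card (V - nbhd V E w - {w})")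
  case True
  then show ?thesis
    using partition_dimension_le_if_balanced_vertex[OF assms(1,2)] by blast
next
  case False
  then show ?thesis
    by (rule partition_dimension_le_if_unbalanced[OF assms(1,2,5,3,4)])
qed

end
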